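(* Let $\vec{\mathcal G}=([n],E)$, $m=|E|$, be an ergodic graph of a deterministic two-player mean-payoff game. For every $(\sigma,\tau)\in\Xi$, $$\mathcal P^{\sigma,\tau}=\{r\in\mathbb R^m:\ \lambda^{\sigma,\tau}(r)+u^{\sigma,\tau}_i(r)-u^{\sigma,\tau}_j(r)>r_{ij}\ \forall (i,j)\in E \text{ with } i\in V_{\max}, j\ne\sigma(i);\ \lambda^{\sigma,\tau}(r)+u^{\sigma,\tau}_i(r)-u^{\sigma,\tau}_j(r)<r_{ij}\ \forall (i,j)\in E \text{ with } i\in V_{\min}, j\ne\tau(i)\}.$$ In particular the sets $\mathcal P^{\sigma,\tau}$ are open polyhedral cones. These cones are pairwise disjoint, and $\mathbb R^m\setminus\mathcal U$ is contained in a finite union of hyperplanes, hence has Lebesgue measure zero. Furthermore, if $r\in\mathcal U$, then the ergodic equation has a unique solution up to adding a constant to every coordinate of the bias, and each maximum and each minimum in the ergodic equation is attained by a single edge.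
   Context: Setting: directed graph $\vec{\mathcal G}=([n],E)$ without multiple edges (loops allowed), each vertex having an outgoing edge, $[n]=V_{\max}\uplus V_{\min}$, weights $r\in\mathbb R^E=\mathbb R^m$. Ergodic equation in $(\lambda,u)\in\mathbb R\times\mathbb R^n$: $\lambda+u_i=\max_{(i,j)\in E}\{r_{ij}+u_j\}$ ($i\in V_{\max}$), $\lambda+u_i=\min_{(i,j)\in E}\{r_{ij}+u_j\}$ ($i\in V_{\min}$); $u$ is a bias if $(\lambda,u)$ solves it. The graph is ergodic if the ergodic equation has a solution for every $r$. Policies $\sigma:V_{\max}\to[n]$, $\tau:V_{\min}\to[n]$ choose outgoing edges; $\sigma$ (resp. $\tau$) is induced by $u$ if $\sigma(i)$ attains the max (resp. $\tau(i)$ attains the min) in the ergodic equation at every $i\in V_{\max}$ (resp. $V_{\min}$). A pair $(\sigma,\tau)$ is a pair of bias-induced policies if both are induced by a common bias. $\vec{\mathcal G}^{\sigma,\tau}$ keeps at each vertex only the edge chosen by its owner's policy; $\Xi$ is the set of pairs for which $\vec{\mathcal G}^{\sigma,\tau}$ has exactly one directed cycle. For $(\sigma,\tau)\in\Xi$: $\lambda^{\sigma,\tau}(r)$ is the mean weight of the cycle of $\vec{\mathcal G}^{\sigma,\tau}$, and $u^{\sigma,\tau}(r)_l$ is the total weight, with respect to edge weights $r_{ij}-\lambda^{\sigma,\tau}(r)$, of the path in $\vec{\mathcal G}^{\sigma,\tau}$ from $l$ to the smallest-index vertex $k$ on its cycle. $\mathcal P^{\sigma,\tau}$ is the set of $r\in\mathbb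 R^m$ such that $(\sigma,\tau)$ is the only pair of bias-induced policies in the game with weights $r$, and $\mathcal U=\bigcup_{(\sigma,\tau)\in\Xi}\mathcal P^{\sigma,\tau}$. *)

theory Defs
  imports "HOL-Analysis.Analysis"
begin

(* Vertices are the naturals 0..n-1 (the set {..<n} plays the role of [n]).  Weight vectors r \<in> R^E are the extensional
  functions E \<rightarrow>\<^sub>E UNIV (the space of PiM E (\<lambda>_. lborel)). *)

definition Vmin :: "nat \<Rightarrow> nat set \<Rightarrow> nat set" where
  "Vmin n Vmax = {..<n} - Vmax"

definition weights :: "(nat \<times> nat) set \<Rightarrow> (nat \<times> nat \<Rightarrow> real) set" where
  "weights E = E \<rightarrow>\<^sub>E (UNIV :: real set)"

definition ergodic_sol ::
  "nat \<Rightarrow> (nat \<times> nat) set \<Rightarrow> nat set \<Rightarrow> (nat \<times> nat \<Rightarrow> real) \<Rightarrow> real \<Rightarrow> (nat \<Rightarrow> real) \<Rightarrow> bool" where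
  "ergodic_sol n E Vmax r lam u \<longleftrightarrow>
     (\<forall>i\<in>Vmax. lam + u i = Max {r (i, j) + u j | j. (i, j) \<in> E}) \<and>
     (\<forall>i\<in>Vmin n Vmax. lam + u i = Min {r (i, j) + u j | j. (i, j) \<in> E})"

definition ergodic_graph :: "nat \<Rightarrow> (nat \<times> nat) set \<Rightarrow> nat set \<Rightarrow> bool" where
  "ergodic_graph n E Vmax \<longleftrightarrow> (\<forall>r \<in> weights E. \<exists>lam u. ergodic_sol n E Vmax r lam u)"

definition max_policy :: "(nat \<times> nat) set \<Rightarrow> nat set \<Rightarrow> (nat \<Rightarrow> nat) \<Rightarrow> bool" where
  "max_policy E Vmax \<sigma> \<longleftrightarrow> \<sigma> \<in> Vmax \<rightarrow>\<^sub>E UNIV \<and> (\<forall>i\<in>Vmax. (i, \<sigma> i) \<in> E)"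

definition min_policy :: "nat \<Rightarrow> (nat \<times> nat) set \<Rightarrow> nat set \<Rightarrow> (nat \<Rightarrow> nat) \<Rightarrow> bool" where
  "min_policy n E Vmax \<tau> \<longleftrightarrow> \<tau> \<in> Vmin n Vmax \<rightarrow>\<^sub>E UNIV \<and> (\<forall>i\<in>Vmin n Vmax. (i, \<tau> i) \<in> E)"

definition bias_induced_pair ::
  "nat \<Rightarrow> (nat \<times> nat) set \<Rightarrow> nat set \<Rightarrow> (nat \<times> nat \<Rightarrow> real) \<Rightarrow> (nat \<Rightarrow> nat) \<Rightarrow> (nat \<Rightarrow> nat) \<Rightarrow> bool" where
  "bias_induced_pair n E Vmax r \<sigma> \<tau> \<longleftrightarrow>
     max_policy E Vmax \<sigma> \<and> min_policy n E Vmax \<tau> \<and>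
     (\<exists>lam u. ergodic_sol n E Vmax r lam u \<and>
        (\<forall>i\<in>Vmax. r (i, \<sigma> i) + u (\<sigma> i) = lam + u i) \<and>
        (\<forall>i\<in>Vmin n Vmax. r (i, \<tau> i) + u (\<tau> i) = lam + u i))"

definition succ_pol :: "nat set \<Rightarrow> (nat \<Rightarrow> nat) \<Rightarrow> (nat \<Rightarrow> nat) \<Rightarrow> nat \<Rightarrow> nat" where
  "succ_pol Vmax \<sigma> \<tau> i = (if i \<in> Vmax then \<sigma> i else \<tau> i)"

(* Directed cycles of a functional graph f on V (vertex sets of the cycles):
  orbits of periodic points. *)
definition fcycles :: "(nat \<Rightarrow> nat) \<Rightarrow> nat set \<Rightarrow> nat set set" where
  "fcycles f V = {C. \<exists>i\<in>V. \<exists>k>0. (f ^^ k) i = i \<and> C = {(f ^^ j) i | j. True}}"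

definition Xi :: "nat \<Rightarrow> (nat \<times> nat) set \<Rightarrow> nat set \<Rightarrow> ((nat \<Rightarrow> nat) \<times> (nat \<Rightarrow> nat)) set" where
  "Xi n E Vmax = {(\<sigma>, \<tau>). max_policy E Vmax \<sigma> \<and> min_policy n E Vmax \<tau> \<and>
                          card (fcycles (succ_pol Vmax \<sigma> \<tau>) {..<n}) = 1}"

definition the_cycle :: "nat \<Rightarrow> nat set \<Rightarrow> (nat \<Rightarrow> nat) \<Rightarrow> (nat \<Rightarrow> nat) \<Rightarrow> nat set" where
  "the_cycle n Vmax \<sigma> \<tau> = (THE C. C \<in> fcycles (succ_pol Vmax \<sigma> \<tau>) {..<n})"

definition lam_pol :: "nat \<Rightarrow> nat set \<Rightarrow> (nat \<Rightarrow> nat) \<Rightarrow> (nat \<Rightarrow> nat) \<Rightarrow> (nat \<times> nat \<Rightarrow> real) \<Rightarrow> real" where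
  "lam_pol n Vmax \<sigma> \<tau> r =
     (let C = the_cycle n Vmax \<sigma> \<tau>; f = succ_pol Vmax \<sigma> \<tau>
      in (\<Sum>i\<in>C. r (i, f i)) / real (card C))"

definition u_pol :: "nat \<Rightarrow> nat set \<Rightarrow> (nat \<Rightarrow> nat) \<Rightarrow> (nat \<Rightarrow> nat) \<Rightarrow> (nat \<times> nat \<Rightarrow> real) \<Rightarrow> nat \<Rightarrow> real" where
  "u_pol n Vmax \<sigma> \<tau> r l =
     (let f = succ_pol Vmax \<sigma> \<tau>; k = Min (the_cycle n Vmax \<sigma> \<tau>);
          t = (LEAST t. (f ^^ t) l = k); lam = lam_pol n Vmax \<sigma> \<tau> r
      in (\<Sum>s<t. r ((f ^^ s) l, (f ^^ Suc s) l) - lam))"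

definition Pcone :: "nat \<Rightarrow> (nat \<times> nat) set \<Rightarrow> nat set \<Rightarrow> (nat \<Rightarrow> nat) \<Rightarrow> (nat \<Rightarrow> nat) \<Rightarrow> (nat \<times> nat \<Rightarrow> real) set" where
  "Pcone n E Vmax \<sigma> \<tau> = {r \<in> weights E. bias_induced_pair n E Vmax r \<sigma> \<tau> \<and>
      (\<forall>\<sigma>' \<tau>'. bias_induced_pair n E Vmax r \<sigma>' \<tau>' \<longrightarrow> \<sigma>' = \<sigma> \<and> \<tau>' = \<tau>)}"

definition Ucones :: "nat \<Rightarrow> (nat \<times> nat) set \<Rightarrow> nat set \<Rightarrow> (nat \<times> nat \<Rightarrow> real) set" where
  "Ucones n E Vmax = (\<Union>(\<sigma>, \<tau>)\<in>Xi n E Vmax. Pcone n E Vmax \<sigma> \<tau>)"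

definition open_polyhedral_cone :: "(nat \<times> nat) set \<Rightarrow> (nat \<times> nat \<Rightarrow> real) set \<Rightarrow> bool" where
  "open_polyhedral_cone E P \<longleftrightarrow> (\<exists>A. finite A \<and>
      P = {r \<in> weights E. \<forall>a\<in>A. (\<Sum>e\<in>E. a e * r e) > 0})"

definition hyperplane :: "(nat \<times> nat) set \<Rightarrow> (nat \<times> nat \<Rightarrow> real) \<Rightarrow> real \<Rightarrow> (nat \<times> nat \<Rightarrow> real) set" where
  "hyperplane E a b = {r \<in> weights E. (\<Sum>e\<in>E. a e * r e) = b}"

end

theory Submission
  imports Defs
begin

text \<open>If \<open>(\<sigma>, \<tau>)\<close> is induced by a bias \<open>u\<close>, then \<open>(\<lambda>, u)\<close> satisfies
  \<open>\<lambda> + u i = r (i, f i) + u (f i)\<close> along the successor map \<open>f\<close> of the policy graph; when this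
  graph has a single cycle, this forces \<open>\<lambda> = lam_pol r\<close> and \<open>u = u_pol r + c\<close>.
  So \<open>(\<sigma>, \<tau>)\<close> is the only bias-induced pair exactly when every other edge is strictly
  suboptimal for \<open>u_pol r\<close>, a finite system of strict linear inequalities in \<open>r\<close>.
  Uniqueness of the bias on such a cone is a max-min argument: for two solutions, the sets where
  \<open>u' - u\<close> is maximal and where it is minimal are both closed under \<open>f\<close>, since all other
  edges are strictly suboptimal; so both contain the cycle, and \<open>u' - u\<close> is constant.
  Conversely, take any bias and policies it induces. Unless two cycles of the policy graph have equal
  mean weight, or some unchosen edge is tight for a pair in \<open>\<Xi>\<close> (finitely many linear
  conditions on \<open>r\<close>), the policy graph has one cycle and all other edges are strictly
  suboptimal, so \<open>r\<close> lies in one of the cones.\<close>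

section \<open>Linear forms on weight vectors\<close>

definition linear_form :: "(nat \<times> nat) set \<Rightarrow> ((nat \<times> nat \<Rightarrow> real) \<Rightarrow> real) \<Rightarrow> bool" where
  "linear_form E L \<longleftrightarrow> (\<exists>a. \<forall>r\<in>weights E. L r = (\<Sum>e\<in>E. a e * r e))"

definition form_coeffs :: "(nat \<times> nat) set \<Rightarrow> ((nat \<times> nat \<Rightarrow> real) \<Rightarrow> real) \<Rightarrow> nat \<times> nat \<Rightarrow> real" where
  "form_coeffs E L = (SOME a. \<forall>r\<in>weights E. L r = (\<Sum>e\<in>E. a e * r e))"

lemma linear_form_coeffs:
  assumes "linear_form E L" and "r \<in> weights E"
  shows "(\<Sum>e\<in>E. form_coeffs E L e * r e) = L r"
proof -
  have "\<forall>r\<in>weights E. L r = (\<Sum>e\<in>E. form_coeffs E L e * r e)"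
    using assms(1) unfolding linear_form_def form_coeffs_def by (rule someI_ex)
  then show ?thesis using assms(2) by simp
qed

lemma linear_form_component:
  assumes "finite E" and "e \<in> E"
  shows "linear_form E (\<lambda>r. r e)"
  unfolding linear_form_def
proof (intro exI ballI)
  fix r :: "nat \<times> nat \<Rightarrow> real"
  have "(\<Sum>e'\<in>E. (if e' = e then 1 else 0) * r e') = (\<Sum>e'\<in>E. if e' = e then r e' else 0)"
    by (intro sum.cong) auto
  then show "r e = (\<Sum>e'\<in>E. (if e' = e then 1 else 0) * r e')"
    using assms by simp
qed

lemma linear_form_add:
  assumes "linear_form E L" and "linear_form E M"
  shows "linear_form E (\<lambda>r. L r + M r)"
proof -
  obtain a b where "\<forall>r\<in>weights E. L r = (\<Sum>e\<in>E. a e * r e)" "\<forall>r\<in>weights E. M r = (\<Sum>e\<in>E. b e * r e)"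
    using assms unfolding linear_form_def by blast
  then show ?thesis
    unfolding linear_form_def by (intro exI[of _ "\<lambda>e. a e + b e"]) (simp add: distrib_right sum.distrib)
qed

lemma linear_form_scale:
  assumes "linear_form E L"
  shows "linear_form E (\<lambda>r. c * L r)"
proof -
  obtain a where "\<forall>r\<in>weights E. L r = (\<Sum>e\<in>E. a e * r e)"
    using assms unfolding linear_form_def by blast
  then show ?thesis
    unfolding linear_form_def by (intro exI[of _ "\<lambda>e. c * a e"]) (simp add: sum_distrib_left mult.assoc)
qed

lemma linear_form_minus: "linear_form E L \<Longrightarrow> linear_form E (\<lambda>r. - L r)"
  using linear_form_scale[of E L "-1"] by simp

lemma linear_form_diff: "linear_form E L \<Longrightarrow> linear_form E M \<Longrightarrow> linear_form E (\<lambda>r. L r - M r)"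
  using linear_form_add[of E L "\<lambda>r. - M r"] linear_form_minus[of E M] by simp

lemma linear_form_divide: "linear_form E L \<Longrightarrow> linear_form E (\<lambda>r. L r / c)"
  using linear_form_scale[of E L "inverse c"] by (simp add: field_simps)

lemma linear_form_sum:
  assumes "finite I" and "\<And>i. i \<in> I \<Longrightarrow> linear_form E (L i)"
  shows "linear_form E (\<lambda>r. \<Sum>i\<in>I. L i r)"
  using assms
proof (induction I rule: finite_induct)
  case empty
  show ?case unfolding linear_form_def by (intro exI[of _ "\<lambda>_. 0"]) simp
next
  case (insert i I)
  then show ?case using linear_form_add[of E "L i" "\<lambda>r. \<Sum>i\<in>I. L i r"] by simp
qed

lemma form_coeffs_nonzero:
  assumes "linear_form E L" and "r \<in> weights E" and "L r \<noteq> 0"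
  shows "\<exists>e\<in>E. form_coeffs E L e \<noteq> 0"
proof (rule ccontr)
  assume "\<not> ?thesis"
  then have "(\<Sum>e\<in>E. form_coeffs E L e * r e) = 0" by simp
  then show False using linear_form_coeffs[OF assms(1,2)] assms(3) by simp
qed

lemma open_polyhedral_cone_linear_forms:
  assumes "finite F" and "\<And>L. L \<in> F \<Longrightarrow> linear_form E L"
  shows "open_polyhedral_cone E {r \<in> weights E. \<forall>L\<in>F. L r > 0}"
  unfolding open_polyhedral_cone_def
proof (intro exI conjI)
  show "finite (form_coeffs E ` F)" using assms(1) by simp
  show "{r \<in> weights E. \<forall>L\<in>F. L r > 0} = {r \<in> weights E. \<forall>a\<in>form_coeffs E ` F. (\<Sum>e\<in>E. a e * r e) > 0}"
    using linear_form_coeffs[OF assms(2)] by auto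
qed

lemma linear_forms_zero_set_in_hyperplanes:
  assumes "finite F" and "\<And>L. L \<in> F \<Longrightarrow> linear_form E L \<and> (\<exists>r\<in>weights E. L r \<noteq> 0)"
  shows "\<exists>H. finite H \<and> (\<forall>(a, b)\<in>H. \<exists>e\<in>E. a e \<noteq> 0) \<and>
           {r \<in> weights E. \<exists>L\<in>F. L r = 0} \<subseteq> (\<Union>(a, b)\<in>H. hyperplane E a b)"
proof (intro exI conjI)
  let ?H = "(\<lambda>L. (form_coeffs E L, 0::real)) ` F"
  show "finite ?H" using assms(1) by simp
  show "\<forall>(a, b)\<in>?H. \<exists>e\<in>E. a e \<noteq> 0" using assms(2) form_coeffs_nonzero by fastforce
  show "{r \<in> weights E. \<exists>L\<in>F. L r = 0} \<subseteq> (\<Union>(a, b)\<in>?H. hyperplane E a b)"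
    using assms(2) linear_form_coeffs by (fastforce simp: hyperplane_def)
qed

section \<open>Measurability and null hyperplanes\<close>

lemma hyperplane_sets:
  assumes "finite E"
  shows "hyperplane E a b \<in> sets (PiM E (\<lambda>_. lborel))"
proof -
  have "hyperplane E a b = {r \<in> space (PiM E (\<lambda>_. lborel)). (\<Sum>e\<in>E. a e * r e) = b}"
    by (simp add: hyperplane_def weights_def space_PiM)
  also have "\<dots> \<in> sets (PiM E (\<lambda>_. lborel))" using assms by measurable
  finally show ?thesis .
qed

lemma open_polyhedral_cone_sets:
  assumes "finite E" and "open_polyhedral_cone E P"
  shows "P \<in> sets (PiM E (\<lambda>_. lborel))"
proof -
  obtain A where "finite A" and P: "P = {r \<in> space (PiM E (\<lambda>_. lborel)). \<forall>a\<in>A. (\<Sum>e\<in>E. a e * r e) > 0}"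
    using assms(2) by (auto simp: open_polyhedral_cone_def weights_def space_PiM)
  show ?thesis unfolding P using assms(1) \<open>finite A\<close> by measurable
qed

lemma hyperplane_null_sets:
  assumes E: "finite E" and e0: "e0 \<in> E" and a0: "a e0 \<noteq> 0"
  shows "hyperplane E a b \<in> null_sets (PiM E (\<lambda>_. lborel))"
proof -
  interpret product_sigma_finite "\<lambda>_. lborel" by standard
  define I where "I = E - {e0}"
  have I: "finite I" "e0 \<notin> I" "insert e0 I = E" using E e0 by (auto simp: I_def)
  let ?H = "hyperplane E a b"
  have H: "?H \<in> sets (PiM E (\<lambda>_. lborel))" using E by (rule hyperplane_sets)
  have slice: "(\<integral>\<^sup>+ y. indicator ?H (x(e0 := y)) \<partial>lborel) = 0" for x
  proof -
    \<comment> \<open>each line parallel to the e0-axis meets the hyperplane in at most one point\<close>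
    define y0 where "y0 = (b - (\<Sum>e\<in>I. a e * x e)) / a e0"
    have "indicator ?H (x(e0 := y)) \<le> (indicator {y0} y :: ennreal)" for y
    proof (cases "x(e0 := y) \<in> ?H")
      case True
      have "(\<Sum>e\<in>I. a e * (x(e0 := y)) e) = (\<Sum>e\<in>I. a e * x e)"
        using I(2) by (intro sum.cong) auto
      then have "(\<Sum>e\<in>E. a e * (x(e0 := y)) e) = a e0 * y + (\<Sum>e\<in>I. a e * x e)"
        unfolding I(3)[symmetric] using I(1,2) by simp
      then have "y = y0"
        using True a0 by (simp add: hyperplane_def y0_def field_simps)
      then show ?thesis using True by simp
    qed simp
    then have "(\<integral>\<^sup>+ y. indicator ?H (x(e0 := y)) \<partial>lborel) \<le> (\<integral>\<^sup>+ y. indicator {y0} y \<partial>lborel)"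
      by (intro nn_integral_mono)
    then show ?thesis by simp
  qed
  have "emeasure (PiM E (\<lambda>_. lborel)) ?H = (\<integral>\<^sup>+ x. indicator ?H x \<partial>PiM E (\<lambda>_. lborel))"
    using H by simp
  also have "\<dots> = (\<integral>\<^sup>+ x. (\<integral>\<^sup>+ y. indicator ?H (x(e0 := y)) \<partial>lborel) \<partial>PiM I (\<lambda>_. lborel))"
    using product_nn_integral_insert[OF I(1,2), of "indicator ?H"] H I(3) by simp
  also have "\<dots> = 0" by (simp add: slice)
  finally show ?thesis using H by (simp add: null_sets_def)
qed

lemma null_sets_if_in_hyperplanes:
  assumes "finite E" and "finite H" and "\<forall>(a, b)\<in>H. \<exists>e\<in>E. a e \<noteq> 0"
    and "S \<in> sets (PiM E (\<lambda>_. lborel))" and "S \<subseteq> (\<Union>(a, b)\<in>H. hyperplane E a b)"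
  shows "S \<in> null_sets (PiM E (\<lambda>_. lborel))"
proof (rule null_sets_subset[OF _ assms(4,5)])
  have "hyperplane E a b \<in> null_sets (PiM E (\<lambda>_. lborel))" if "(a, b) \<in> H" for a b
    using that assms(3) hyperplane_null_sets[OF assms(1)] by blast
  then show "(\<Union>(a, b)\<in>H. hyperplane E a b) \<in> null_sets (PiM E (\<lambda>_. lborel))"
    using assms(2) by (intro null_sets_UN' countable_finite) auto
qed

section \<open>Functional graphs\<close>

locale functional_graph =
  fixes V :: "nat set" and f :: "nat \<Rightarrow> nat"
  assumes finite_V: "finite V" and f_in: "\<And>i. i \<in> V \<Longrightarrow> f i \<in> V"
begin

lemma funpow_in: "i \<in> V \<Longrightarrow> (f ^^ t) i \<in> V"
  by (induction t) (auto simp: f_in)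

lemma eventually_periodic:
  assumes i: "i \<in> V"
  obtains a p where "p > 0" and "(f ^^ p) ((f ^^ a) i) = (f ^^ a) i"
proof -
  have "\<not> inj_on (\<lambda>s. (f ^^ s) i) {..card V}"
  proof
    assume "inj_on (\<lambda>s. (f ^^ s) i) {..card V}"
    then have "card ((\<lambda>s. (f ^^ s) i) ` {..card V}) = Suc (card V)" by (simp add: card_image)
    moreover have "(\<lambda>s. (f ^^ s) i) ` {..card V} \<subseteq> V" using funpow_in[OF i] by auto
    then have "card ((\<lambda>s. (f ^^ s) i) ` {..card V}) \<le> card V" by (rule card_mono[OF finite_V])
    ultimately show False by simp
  qed
  then obtain a b where "a < b" and ab: "(f ^^ a) i = (f ^^ b) i"
    unfolding inj_on_def by (metis linorder_neqE_nat)
  have "(f ^^ (b - a)) ((f ^^ a) i) = (f ^^ (b - a + a)) i" by (simp add: funpow_add)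
  then have "(f ^^ (b - a)) ((f ^^ a) i) = (f ^^ a) i" using ab \<open>a < b\<close> by simp
  then show ?thesis using \<open>a < b\<close> by (intro that[where a = a and p = "b - a"]) simp_all
qed

definition orbit_from :: "nat \<Rightarrow> nat set" where
  "orbit_from x = {(f ^^ j) x | j. True}"

lemma periodic_orbit_in_fcycles: "x \<in> V \<Longrightarrow> p > 0 \<Longrightarrow> (f ^^ p) x = x \<Longrightarrow> orbit_from x \<in> fcycles f V"
  unfolding fcycles_def orbit_from_def by blast

lemma fcyclesE:
  assumes "C \<in> fcycles f V"
  obtains x p where "x \<in> V" and "p > 0" and "(f ^^ p) x = x" and "C = orbit_from x"
  using assms unfolding fcycles_def orbit_from_def by auto

lemma fcycle_subset: "C \<in> fcycles f V \<Longrightarrow> C \<subseteq> V"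
  by (elim fcyclesE) (use funpow_in in \<open>auto simp: orbit_from_def\<close>)

lemma finite_fcycle: "C \<in> fcycles f V \<Longrightarrow> finite C"
  using fcycle_subset finite_V finite_subset by blast

lemma fcycle_nonempty: "C \<in> fcycles f V \<Longrightarrow> C \<noteq> {}"
  by (elim fcyclesE) (auto simp: orbit_from_def)

lemma fcycles_nonempty:
  assumes "V \<noteq> {}"
  shows "fcycles f V \<noteq> {}"
proof -
  obtain i where i: "i \<in> V" using assms by blast
  obtain a p where "p > 0" and "(f ^^ p) ((f ^^ a) i) = (f ^^ a) i"
    using eventually_periodic[OF i] .
  then show ?thesis using periodic_orbit_in_fcycles funpow_in[OF i] by blast
qed

lemma fcycle_image:
  assumes "C \<in> fcycles f V"
  shows "f ` C = C"
proof -
  obtain x p where p: "p > 0" "(f ^^ p) x = x" and C: "C = orbit_from x"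
    using assms by (rule fcyclesE)
  have "f ((f ^^ j) x) = (f ^^ Suc j) x" for j by simp
  moreover have "(f ^^ j) x = f ((f ^^ (j + p - 1)) x)" for j
  proof -
    have "(f ^^ j) x = (f ^^ (j + p)) x" using p(2) by (simp add: funpow_add)
    also have "\<dots> = (f ^^ Suc (j + p - 1)) x" using p(1) by simp
    finally show ?thesis by simp
  qed
  ultimately show ?thesis unfolding C orbit_from_def by blast
qed

lemma fcycle_sum_shift:
  assumes "C \<in> fcycles f V"
  shows "(\<Sum>i\<in>C. g (f i)) = (\<Sum>i\<in>C. g i)"
proof -
  have "inj_on f C" using assms by (intro finite_surj_inj finite_fcycle) (auto simp: fcycle_image)
  then show ?thesis using sum.reindex[of f C g] fcycle_image[OF assms] by simp
qed

definition potential :: "(nat \<times> nat \<Rightarrow> real) \<Rightarrow> real \<Rightarrow> (nat \<Rightarrow> real) \<Rightarrow> bool" where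
  "potential r lam u \<longleftrightarrow> (\<forall>i\<in>V. lam + u i = r (i, f i) + u (f i))"

lemma potential_cycle_sum:
  assumes pot: "potential r lam u" and C: "C \<in> fcycles f V"
  shows "real (card C) * lam = (\<Sum>i\<in>C. r (i, f i))"
proof -
  have "(\<Sum>i\<in>C. lam + u i) = (\<Sum>i\<in>C. r (i, f i) + u (f i))"
    using pot fcycle_subset[OF C] by (intro sum.cong) (auto simp: potential_def)
  then show ?thesis by (simp add: sum.distrib fcycle_sum_shift[OF C])
qed

lemma potential_path_sum:
  assumes pot: "potential r lam u" and i: "i \<in> V"
  shows "u i = (\<Sum>s<t. r ((f ^^ s) i, (f ^^ Suc s) i) - lam) + u ((f ^^ t) i)"
proof (induction t)
  case (Suc t)
  have "lam + u ((f ^^ t) i) = r ((f ^^ t) i, (f ^^ Suc t) i) + u ((f ^^ Suc t) i)"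
    using pot funpow_in[OF i] by (simp add: potential_def)
  with Suc show ?case by simp
qed simp

end

locale unicyclic = functional_graph +
  assumes single_fcycle: "card (fcycles f V) = 1"
begin

definition cycle :: "nat set" where
  "cycle = (THE C. C \<in> fcycles f V)"

lemma fcycles_eq: "fcycles f V = {cycle}"
proof -
  obtain C where "fcycles f V = {C}" using single_fcycle by (rule card_1_singletonE)
  then show ?thesis unfolding cycle_def by simp
qed

lemma cycle_in_fcycles: "cycle \<in> fcycles f V"
  using fcycles_eq by simp

definition root :: nat where
  "root = Min cycle"

lemma root_in_cycle: "root \<in> cycle"
  unfolding root_def using finite_fcycle fcycle_nonempty cycle_in_fcycles by simp

lemma root_in_V: "root \<in> V"
  using root_in_cycle fcycle_subset[OF cycle_in_fcycles] by blast

lemma reaches_cycle: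
  assumes i: "i \<in> V" and c: "c \<in> cycle"
  shows "\<exists>t. (f ^^ t) i = c"
proof -
  obtain a p where "p > 0" and "(f ^^ p) ((f ^^ a) i) = (f ^^ a) i"
    using eventually_periodic[OF i] .
  then have "orbit_from ((f ^^ a) i) = cycle"
    using periodic_orbit_in_fcycles funpow_in[OF i] fcycles_eq by blast
  then obtain j where "c = (f ^^ j) ((f ^^ a) i)" using c by (auto simp: orbit_from_def)
  then have "c = (f ^^ (j + a)) i" by (simp add: funpow_add)
  then show ?thesis by metis
qed

lemma cycle_subset_closed_set:
  assumes "x \<in> S" and "x \<in> V" and closed: "\<And>i. i \<in> S \<Longrightarrow> f i \<in> S"
  shows "cycle \<subseteq> S"
proof
  fix c assume "c \<in> cycle"
  then obtain t where "(f ^^ t) x = c" using reaches_cycle \<open>x \<in> V\<close> by blast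
  moreover have "(f ^^ t) x \<in> S" for t by (induction t) (auto simp: \<open>x \<in> S\<close> closed)
  ultimately show "c \<in> S" by blast
qed

definition hitting_time :: "nat \<Rightarrow> nat" where
  "hitting_time i = (LEAST t. (f ^^ t) i = root)"

lemma funpow_hitting_time: "i \<in> V \<Longrightarrow> (f ^^ hitting_time i) i = root"
  unfolding hitting_time_def by (rule LeastI_ex) (use reaches_cycle root_in_cycle in blast)

lemma hitting_time_le: "(f ^^ t) i = root \<Longrightarrow> hitting_time i \<le> t"
  unfolding hitting_time_def by (rule Least_le)

lemma hitting_time_root: "hitting_time root = 0"
  using hitting_time_le[of 0 root] by simp

lemma hitting_time_step:
  assumes i: "i \<in> V" "i \<noteq> root"
  shows "hitting_time i = Suc (hitting_time (f i))"
proof -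
  obtain t where t: "hitting_time i = Suc t"
    using funpow_hitting_time[OF i(1)] i(2) by (metis funpow_0 not0_implies_Suc)
  have "(f ^^ t) (f i) = root"
    using funpow_hitting_time[OF i(1)] t by (simp add: funpow_Suc_right del: funpow.simps)
  then have "hitting_time (f i) \<le> t" by (rule hitting_time_le)
  moreover have "(f ^^ Suc (hitting_time (f i))) i = root"
    using funpow_hitting_time[OF f_in[OF i(1)]] by (simp add: funpow_Suc_right del: funpow.simps)
  then have "hitting_time i \<le> Suc (hitting_time (f i))" by (rule hitting_time_le)
  ultimately show ?thesis using t by simp
qed

definition cycle_mean :: "(nat \<times> nat \<Rightarrow> real) \<Rightarrow> real" where
  "cycle_mean r = (\<Sum>i\<in>cycle. r (i, f i)) / real (card cycle)"

definition path_bias :: "(nat \<times> nat \<Rightarrow> real) \<Rightarrow> nat \<Rightarrow> real" where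
  "path_bias r l = (\<Sum>s<hitting_time l. r ((f ^^ s) l, (f ^^ Suc s) l) - cycle_mean r)"

lemma card_cycle_pos: "card cycle > 0"
  using finite_fcycle fcycle_nonempty cycle_in_fcycles card_gt_0_iff by blast

lemma path_bias_root: "path_bias r root = 0"
  by (simp add: path_bias_def hitting_time_root)

lemma potential_path_bias: "potential r (cycle_mean r) (path_bias r)"
proof -
  let ?lam = "cycle_mean r" and ?u = "path_bias r"
  have off_root: "?lam + ?u i = r (i, f i) + ?u (f i)" if i: "i \<in> V" "i \<noteq> root" for i
  proof -
    have "?u i = (\<Sum>s<Suc (hitting_time (f i)). r ((f ^^ s) i, (f ^^ Suc s) i) - ?lam)"
      using hitting_time_step[OF i] by (simp add: path_bias_def)
    also have "\<dots> = (r (i, f i) - ?lam) +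
        (\<Sum>s<hitting_time (f i). r ((f ^^ Suc s) i, (f ^^ Suc (Suc s)) i) - ?lam)"
      by (subst sum.lessThan_Suc_shift) simp
    also have "\<dots> = (r (i, f i) - ?lam) + ?u (f i)"
      by (simp add: path_bias_def funpow_Suc_right del: funpow.simps)
    finally show ?thesis by simp
  qed
  \<comment> \<open>at the root the equation follows by summing over the cycle, using the definition of the mean\<close>
  have "(\<Sum>i\<in>cycle. ?lam + ?u i) = (\<Sum>i\<in>cycle. r (i, f i) + ?u (f i))"
    using card_cycle_pos
    by (simp add: sum.distrib fcycle_sum_shift[OF cycle_in_fcycles] cycle_mean_def)
  moreover have "(\<Sum>i\<in>cycle - {root}. ?lam + ?u i) = (\<Sum>i\<in>cycle - {root}. r (i, f i) + ?u (f i))"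
    using off_root fcycle_subset[OF cycle_in_fcycles] by (intro sum.cong) auto
  ultimately have "?lam + ?u root = r (root, f root) + ?u (f root)"
    using sum.remove[OF finite_fcycle[OF cycle_in_fcycles] root_in_cycle] by (metis add_right_cancel)
  then show ?thesis using off_root unfolding potential_def by metis
qed

lemma potential_iff:
  "potential r lam u \<longleftrightarrow> lam = cycle_mean r \<and> (\<forall>l\<in>V. u l = path_bias r l + u root)"
proof
  assume pot: "potential r lam u"
  have "lam = cycle_mean r"
    using potential_cycle_sum[OF pot cycle_in_fcycles] card_cycle_pos
    by (simp add: cycle_mean_def field_simps)
  moreover have "u l = path_bias r l + u root" if "l \<in> V" for l
    using potential_path_sum[OF pot that, of "hitting_time l"] funpow_hitting_time[OF that]
      \<open>lam = cycle_mean r\<close>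
    by (simp add: path_bias_def)
  ultimately show "lam = cycle_mean r \<and> (\<forall>l\<in>V. u l = path_bias r l + u root)" by blast
next
  assume "lam = cycle_mean r \<and> (\<forall>l\<in>V. u l = path_bias r l + u root)"
  then show "potential r lam u"
    using potential_path_bias f_in by (simp add: potential_def)
qed

lemma drift_zero_and_constant:
  fixes d :: "nat \<Rightarrow> real"
  assumes up: "\<And>i. i \<in> V \<Longrightarrow> \<exists>j\<in>V. d i + \<delta> \<le> d j \<and> (d j \<le> d i + \<delta> \<longrightarrow> j = f i)"
    and down: "\<And>i. i \<in> V \<Longrightarrow> \<exists>j\<in>V. d j \<le> d i + \<delta> \<and> (d i + \<delta> \<le> d j \<longrightarrow> j = f i)"
  shows "\<delta> = 0" and "\<forall>i\<in>V. d i = d root"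
proof -
  have D: "finite (d ` V)" "d ` V \<noteq> {}" using finite_V root_in_V by auto
  define top where "top = Max (d ` V)"
  define bot where "bot = Min (d ` V)"
  have bounds: "bot \<le> d i" "d i \<le> top" if "i \<in> V" for i
    using D that by (auto simp: top_def bot_def)
  obtain itop where itop: "itop \<in> V" "d itop = top" using Max_in[OF D] by (auto simp: top_def)
  obtain ibot where ibot: "ibot \<in> V" "d ibot = bot" using Min_in[OF D] by (auto simp: bot_def)
  have "\<delta> \<le> 0" using up[OF itop(1)] bounds(2) itop(2) by force
  moreover have "0 \<le> \<delta>" using down[OF ibot(1)] bounds(1) ibot(2) by force
  ultimately show \<delta>: "\<delta> = 0" by simp
  \<comment> \<open>the level sets of the extreme values are closed under f, hence contain the cycle\<close>
  have "cycle \<subseteq> {i \<in> V. d i = top}"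
  proof (rule cycle_subset_closed_set)
    fix i assume "i \<in> {i \<in> V. d i = top}"
    then show "f i \<in> {i \<in> V. d i = top}" using up[of i] bounds(2) \<delta> by force
  qed (use itop in auto)
  moreover have "cycle \<subseteq> {i \<in> V. d i = bot}"
  proof (rule cycle_subset_closed_set)
    fix i assume "i \<in> {i \<in> V. d i = bot}"
    then show "f i \<in> {i \<in> V. d i = bot}" using down[of i] bounds(1) \<delta> by force
  qed (use ibot in auto)
  ultimately have "d root = top" "d root = bot" using root_in_cycle by auto
  then show "\<forall>i\<in>V. d i = d root" using bounds by force
qed

end

section \<open>The ergodic equation and policies\<close>

locale game =
  fixes n :: nat and E :: "(nat \<times> nat) set" and Vmax :: "nat set"
  assumes edges_in: "E \<subseteq> {..<n} \<times> {..<n}"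
    and Vmax_in: "Vmax \<subseteq> {..<n}"
    and out_edge: "\<And>i. i < n \<Longrightarrow> \<exists>j. (i, j) \<in> E"
begin

lemma finite_E: "finite E"
  using edges_in finite_subset by blast

lemma edge_source: "(i, j) \<in> E \<Longrightarrow> i < n"
  and edge_target: "(i, j) \<in> E \<Longrightarrow> j < n"
  using edges_in by auto

lemma Vmin_iff: "i \<in> Vmin n Vmax \<longleftrightarrow> i < n \<and> i \<notin> Vmax"
  by (auto simp: Vmin_def)

lemma Vmax_or_Vmin: "i < n \<Longrightarrow> (i \<in> Vmax \<Longrightarrow> P) \<Longrightarrow> (i \<in> Vmin n Vmax \<Longrightarrow> P) \<Longrightarrow> P"
  by (auto simp: Vmin_iff)

lemma finite_edge_values: "finite {r (i, j) + u j | j. (i, j) \<in> E}"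
proof -
  have "{r (i, j) + u j | j. (i, j) \<in> E} = (\<lambda>j. r (i, j) + u j) ` {j. (i, j) \<in> E}" by auto
  moreover have "{j. (i, j) \<in> E} \<subseteq> {..<n}" using edge_target by auto
  ultimately show ?thesis by (metis finite_imageI finite_lessThan finite_subset)
qed

lemma ergodic_sol_max_ge:
  assumes "ergodic_sol n E Vmax r lam u" and "i \<in> Vmax" and "(i, j) \<in> E"
  shows "r (i, j) + u j \<le> lam + u i"
proof -
  have "r (i, j) + u j \<le> Max {r (i, j) + u j | j. (i, j) \<in> E}"
    using assms(3) by (intro Max_ge finite_edge_values) auto
  then show ?thesis using assms(1,2) unfolding ergodic_sol_def by auto
qed

lemma ergodic_sol_min_le:
  assumes "ergodic_sol n E Vmax r lam u" and "i \<in> Vmin n Vmax" and "(i, j) \<in> E"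
  shows "lam + u i \<le> r (i, j) + u j"
proof -
  have "Min {r (i, j) + u j | j. (i, j) \<in> E} \<le> r (i, j) + u j"
    using assms(3) by (intro Min_le finite_edge_values) auto
  then show ?thesis using assms(1,2) unfolding ergodic_sol_def by auto
qed

lemma ergodic_sol_attained:
  assumes sol: "ergodic_sol n E Vmax r lam u" and i: "i < n"
  shows "\<exists>j. (i, j) \<in> E \<and> r (i, j) + u j = lam + u i"
proof -
  have ne: "{r (i, j) + u j | j. (i, j) \<in> E} \<noteq> {}" using out_edge[OF i] by auto
  show ?thesis
  proof (rule Vmax_or_Vmin[OF i])
    assume "i \<in> Vmax"
    then show ?thesis using Max_in[OF finite_edge_values ne] sol unfolding ergodic_sol_def by force
  next
    assume "i \<in> Vmin n Vmax"
    then show ?thesis using Min_in[OF finite_edge_values ne] sol unfolding ergodic_sol_def by force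
  qed
qed

lemma ergodic_solI:
  assumes attained: "\<And>i. i < n \<Longrightarrow> \<exists>j. (i, j) \<in> E \<and> r (i, j) + u j = lam + u i"
    and max_ge: "\<And>i j. i \<in> Vmax \<Longrightarrow> (i, j) \<in> E \<Longrightarrow> r (i, j) + u j \<le> lam + u i"
    and min_le: "\<And>i j. i \<in> Vmin n Vmax \<Longrightarrow> (i, j) \<in> E \<Longrightarrow> lam + u i \<le> r (i, j) + u j"
  shows "ergodic_sol n E Vmax r lam u"
  unfolding ergodic_sol_def
proof (intro conjI ballI)
  fix i assume i: "i \<in> Vmax"
  then obtain j where "(i, j) \<in> E" "r (i, j) + u j = lam + u i" using attained Vmax_in by blast
  then show "lam + u i = Max {r (i, j) + u j | j. (i, j) \<in> E}"
    using max_ge[OF i] by (intro Max_eqI[symmetric] finite_edge_values) force+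
next
  fix i assume i: "i \<in> Vmin n Vmax"
  then obtain j where "(i, j) \<in> E" "r (i, j) + u j = lam + u i" using attained by (auto simp: Vmin_iff)
  then show "lam + u i = Min {r (i, j) + u j | j. (i, j) \<in> E}"
    using min_le[OF i] by (intro Min_eqI[symmetric] finite_edge_values) force+
qed

lemma succ_pol_edge:
  assumes "max_policy E Vmax \<sigma>" and "min_policy n E Vmax \<tau>" and "i < n"
  shows "(i, succ_pol Vmax \<sigma> \<tau> i) \<in> E"
  using assms by (auto simp: max_policy_def min_policy_def succ_pol_def Vmin_iff)

lemma bias_induced_pair_iff:
  "bias_induced_pair n E Vmax r \<sigma> \<tau> \<longleftrightarrow> max_policy E Vmax \<sigma> \<and> min_policy n E Vmax \<tau> \<and>
     (\<exists>lam u. ergodic_sol n E Vmax r lam u \<and>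
        (\<forall>i<n. r (i, succ_pol Vmax \<sigma> \<tau> i) + u (succ_pol Vmax \<sigma> \<tau> i) = lam + u i))"
proof -
  have "(\<forall>i<n. r (i, succ_pol Vmax \<sigma> \<tau> i) + u (succ_pol Vmax \<sigma> \<tau> i) = lam + u i) \<longleftrightarrow>
        (\<forall>i\<in>Vmax. r (i, \<sigma> i) + u (\<sigma> i) = lam + u i) \<and>
        (\<forall>i\<in>Vmin n Vmax. r (i, \<tau> i) + u (\<tau> i) = lam + u i)" for lam u
    using Vmax_in by (auto simp: succ_pol_def Vmin_iff)
  then show ?thesis unfolding bias_induced_pair_def by simp
qed

lemma ergodic_sol_induces_pair:
  assumes sol: "ergodic_sol n E Vmax r lam u"
  obtains \<sigma> \<tau> where "max_policy E Vmax \<sigma>" and "min_policy n E Vmax \<tau>"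
    and "\<forall>i<n. r (i, succ_pol Vmax \<sigma> \<tau> i) + u (succ_pol Vmax \<sigma> \<tau> i) = lam + u i"
proof -
  define g where "g i = (SOME j. (i, j) \<in> E \<and> r (i, j) + u j = lam + u i)" for i
  have g: "(i, g i) \<in> E \<and> r (i, g i) + u (g i) = lam + u i" if "i < n" for i
    unfolding g_def using someI_ex[OF ergodic_sol_attained[OF sol that]] .
  have "max_policy E Vmax (restrict g Vmax)"
    using g Vmax_in by (auto simp: max_policy_def)
  moreover have "min_policy n E Vmax (restrict g (Vmin n Vmax))"
    using g by (auto simp: min_policy_def Vmin_iff)
  moreover have "succ_pol Vmax (restrict g Vmax) (restrict g (Vmin n Vmax)) i = g i" if "i < n" for i
    using that by (simp add: succ_pol_def Vmin_iff)
  ultimately show thesis using that g by simp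
qed

lemma tight_edge_other_pair:
  assumes \<sigma>: "max_policy E Vmax \<sigma>" and \<tau>: "min_policy n E Vmax \<tau>"
    and sol: "ergodic_sol n E Vmax r lam u"
    and tight: "\<forall>i<n. r (i, succ_pol Vmax \<sigma> \<tau> i) + u (succ_pol Vmax \<sigma> \<tau> i) = lam + u i"
    and e: "(i, j) \<in> E" and tight_e: "r (i, j) + u j = lam + u i" and other: "j \<noteq> succ_pol Vmax \<sigma> \<tau> i"
  shows "\<exists>\<sigma>' \<tau>'. bias_induced_pair n E Vmax r \<sigma>' \<tau>' \<and> (\<sigma>', \<tau>') \<noteq> (\<sigma>, \<tau>)"
proof (rule Vmax_or_Vmin[OF edge_source[OF e]])
  assume i: "i \<in> Vmax"
  have "max_policy E Vmax (\<sigma>(i := j))"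
    using \<sigma> e i by (auto simp: max_policy_def PiE_def extensional_def)
  moreover have "succ_pol Vmax (\<sigma>(i := j)) \<tau> = (succ_pol Vmax \<sigma> \<tau>)(i := j)"
    using i by (auto simp: succ_pol_def)
  ultimately have "bias_induced_pair n E Vmax r (\<sigma>(i := j)) \<tau>"
    unfolding bias_induced_pair_iff using \<tau> sol tight tight_e by auto
  moreover have "\<sigma>(i := j) \<noteq> \<sigma>" using other i by (metis fun_upd_same succ_pol_def)
  ultimately show ?thesis by blast
next
  assume i: "i \<in> Vmin n Vmax"
  have "min_policy n E Vmax (\<tau>(i := j))"
    using \<tau> e i by (auto simp: min_policy_def PiE_def extensional_def)
  moreover have "succ_pol Vmax \<sigma> (\<tau>(i := j)) = (succ_pol Vmax \<sigma> \<tau>)(i := j)"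
    using i by (auto simp: succ_pol_def Vmin_iff)
  ultimately have "bias_induced_pair n E Vmax r \<sigma> (\<tau>(i := j))"
    unfolding bias_induced_pair_iff using \<sigma> sol tight tight_e by auto
  moreover have "\<tau>(i := j) \<noteq> \<tau>" using other i by (metis Vmin_iff fun_upd_same succ_pol_def)
  ultimately show ?thesis by blast
qed

lemma finite_max_policies: "finite {\<sigma>. max_policy E Vmax \<sigma>}"
proof (rule finite_subset)
  show "{\<sigma>. max_policy E Vmax \<sigma>} \<subseteq> Vmax \<rightarrow>\<^sub>E {..<n}"
    using edge_target by (auto simp: max_policy_def PiE_def)
  show "finite (Vmax \<rightarrow>\<^sub>E {..<n})" using Vmax_in finite_subset by (blast intro: finite_PiE)
qed

lemma finite_min_policies: "finite {\<tau>. min_policy n E Vmax \<tau>}"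
proof (rule finite_subset)
  show "{\<tau>. min_policy n E Vmax \<tau>} \<subseteq> Vmin n Vmax \<rightarrow>\<^sub>E {..<n}"
    using edge_target by (auto simp: min_policy_def PiE_def)
  show "finite (Vmin n Vmax \<rightarrow>\<^sub>E {..<n})" by (simp add: Vmin_def finite_PiE)
qed

lemma finite_Xi: "finite (Xi n E Vmax)"
proof (rule finite_subset)
  show "Xi n E Vmax \<subseteq> {\<sigma>. max_policy E Vmax \<sigma>} \<times> {\<tau>. min_policy n E Vmax \<tau>}"
    by (auto simp: Xi_def)
qed (simp add: finite_max_policies finite_min_policies)

end

definition cycle_weight_gap :: "(nat \<Rightarrow> nat) \<Rightarrow> nat set \<Rightarrow> nat set \<Rightarrow> (nat \<times> nat \<Rightarrow> real) \<Rightarrow> real" where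
  "cycle_weight_gap g C1 C2 r =
     real (card C2) * (\<Sum>i\<in>C1. r (i, g i)) - real (card C1) * (\<Sum>i\<in>C2. r (i, g i))"

locale policy_pair = game +
  fixes \<sigma> \<tau> :: "nat \<Rightarrow> nat"
  assumes max_policy: "max_policy E Vmax \<sigma>" and min_policy: "min_policy n E Vmax \<tau>"
begin

abbreviation succ :: "nat \<Rightarrow> nat" where
  "succ \<equiv> succ_pol Vmax \<sigma> \<tau>"

lemma succ_edge: "i < n \<Longrightarrow> (i, succ i) \<in> E"
  using succ_pol_edge[OF max_policy min_policy] .

lemma succ_max: "i \<in> Vmax \<Longrightarrow> succ i = \<sigma> i"
  and succ_min: "i \<in> Vmin n Vmax \<Longrightarrow> succ i = \<tau> i"
  by (simp_all add: succ_pol_def Vmin_iff)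

sublocale functional_graph "{..<n}" succ
  using succ_edge edge_target by unfold_locales auto

lemma bias_induced_pair_iff_potential:
  "bias_induced_pair n E Vmax r \<sigma> \<tau> \<longleftrightarrow> (\<exists>lam u. ergodic_sol n E Vmax r lam u \<and> potential r lam u)"
proof -
  have "potential r lam u \<longleftrightarrow> (\<forall>i<n. r (i, succ i) + u (succ i) = lam + u i)" for lam u
    by (auto simp: potential_def)
  then show ?thesis using max_policy min_policy by (simp add: bias_induced_pair_iff)
qed

lemma sum_cycle_unit_weight:
  assumes "C \<in> fcycles succ {..<n}" and "i < n"
  shows "(\<Sum>i'\<in>C. restrict (indicator {(i, succ i)}) E (i', succ i')) = of_bool (i \<in> C)"
proof -
  have "(\<Sum>i'\<in>C. restrict (indicator {(i, succ i)}) E (i', succ i')) = (\<Sum>i'\<in>C. of_bool (i' = i))"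
    using fcycle_subset[OF assms(1)] succ_edge by (intro sum.cong) (auto simp: indicator_def)
  then show ?thesis using finite_fcycle[OF assms(1)] by (simp add: of_bool_def sum.delta)
qed

lemma linear_form_cycle_weight_gap:
  assumes "C1 \<in> fcycles succ {..<n}" and "C2 \<in> fcycles succ {..<n}"
  shows "linear_form E (cycle_weight_gap succ C1 C2)"
proof -
  have "linear_form E (\<lambda>r. \<Sum>i\<in>C. r (i, succ i))" if "C \<in> fcycles succ {..<n}" for C
    using that fcycle_subset finite_fcycle succ_edge
    by (intro linear_form_sum linear_form_component finite_E) auto
  then show ?thesis
    unfolding cycle_weight_gap_def[abs_def] using assms by (intro linear_form_diff linear_form_scale)
qed

lemma cycle_weight_gap_nonvanishing:
  assumes C1: "C1 \<in> fcycles succ {..<n}" and C2: "C2 \<in> fcycles succ {..<n}" and "C1 \<noteq> C2"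
  shows "\<exists>r\<in>weights E. cycle_weight_gap succ C1 C2 r \<noteq> 0"
proof -
  \<comment> \<open>test on the unit weight of the edge leaving a vertex that lies on exactly one of the cycles\<close>
  obtain i where i: "(i \<in> C1) \<noteq> (i \<in> C2)" using \<open>C1 \<noteq> C2\<close> by blast
  then have "i < n" using fcycle_subset[OF C1] fcycle_subset[OF C2] by blast
  let ?r = "restrict (indicator {(i, succ i)}) E"
  have "card C1 > 0" "card C2 > 0"
    using C1 C2 finite_fcycle fcycle_nonempty card_gt_0_iff by blast+
  then have "cycle_weight_gap succ C1 C2 ?r \<noteq> 0"
    using i unfolding cycle_weight_gap_def sum_cycle_unit_weight[OF C1 \<open>i < n\<close>]
      sum_cycle_unit_weight[OF C2 \<open>i < n\<close>] by auto
  moreover have "?r \<in> weights E" by (simp add: weights_def)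
  ultimately show ?thesis by blast
qed

lemma potential_cycle_weight_gap:
  assumes "potential r lam u" and "C1 \<in> fcycles succ {..<n}" and "C2 \<in> fcycles succ {..<n}"
  shows "cycle_weight_gap succ C1 C2 r = 0"
  unfolding cycle_weight_gap_def
    potential_cycle_sum[OF assms(1,2), symmetric] potential_cycle_sum[OF assms(1,3), symmetric]
  by simp

end

section \<open>Pairs of policies whose graph has a single cycle\<close>

definition edge_slack ::
  "nat \<Rightarrow> nat set \<Rightarrow> (nat \<Rightarrow> nat) \<Rightarrow> (nat \<Rightarrow> nat) \<Rightarrow> nat \<Rightarrow> nat \<Rightarrow> (nat \<times> nat \<Rightarrow> real) \<Rightarrow> real" where
  "edge_slack n Vmax \<sigma> \<tau> i j r =
     lam_pol n Vmax \<sigma> \<tau> r + u_pol n Vmax \<sigma> \<tau> r i - u_pol n Vmax \<sigma> \<tau> r j - r (i, j)"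

definition strictly_optimal ::
  "nat \<Rightarrow> (nat \<times> nat) set \<Rightarrow> nat set \<Rightarrow> (nat \<Rightarrow> nat) \<Rightarrow> (nat \<Rightarrow> nat) \<Rightarrow> (nat \<times> nat \<Rightarrow> real) set" where
  "strictly_optimal n E Vmax \<sigma> \<tau> =
     {r \<in> weights E. \<forall>(i, j) \<in> E.
        (i \<in> Vmax \<and> j \<noteq> \<sigma> i \<longrightarrow>
           lam_pol n Vmax \<sigma> \<tau> r + u_pol n Vmax \<sigma> \<tau> r i - u_pol n Vmax \<sigma> \<tau> r j > r (i, j)) \<and>
        (i \<in> Vmin n Vmax \<and> j \<noteq> \<tau> i \<longrightarrow>
           lam_pol n Vmax \<sigma> \<tau> r + u_pol n Vmax \<sigma> \<tau> r i - u_pol n Vmax \<sigma> \<tau> r j < r (i, j))}"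

locale Xi_pair = policy_pair +
  assumes single_fcycle_succ: "card (fcycles (succ_pol Vmax \<sigma> \<tau>) {..<n}) = 1"
begin

sublocale unicyclic "{..<n}" succ
  by unfold_locales (rule single_fcycle_succ)

lemma lam_pol_eq: "lam_pol n Vmax \<sigma> \<tau> r = cycle_mean r"
  by (simp add: lam_pol_def Let_def the_cycle_def cycle_def cycle_mean_def)

lemma u_pol_eq: "u_pol n Vmax \<sigma> \<tau> r = path_bias r"
  by (simp add: u_pol_def Let_def fun_eq_iff lam_pol_eq the_cycle_def cycle_def root_def hitting_time_def
      path_bias_def)

lemma linear_form_cycle_mean: "linear_form E cycle_mean"
proof -
  have "linear_form E (\<lambda>r. (\<Sum>i\<in>cycle. r (i, succ i)) / real (card cycle))"
    using fcycle_subset[OF cycle_in_fcycles] finite_fcycle[OF cycle_in_fcycles] succ_edge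
    by (intro linear_form_divide linear_form_sum linear_form_component finite_E) auto
  then show ?thesis by (simp add: cycle_mean_def[abs_def])
qed

lemma linear_form_path_bias:
  assumes "l < n"
  shows "linear_form E (\<lambda>r. path_bias r l)"
proof -
  have "((succ ^^ s) l, (succ ^^ Suc s) l) \<in> E" for s
    using succ_edge funpow_in assms by simp
  then show ?thesis unfolding path_bias_def
    by (intro linear_form_sum linear_form_diff linear_form_cycle_mean linear_form_component finite_E)
      simp_all
qed

lemma linear_form_edge_slack:
  assumes "(i, j) \<in> E"
  shows "linear_form E (edge_slack n Vmax \<sigma> \<tau> i j)"
  unfolding edge_slack_def[abs_def] lam_pol_eq u_pol_eq
  using assms edge_source edge_target
  by (intro linear_form_diff linear_form_add linear_form_cycle_mean linear_form_path_bias
      linear_form_component finite_E) auto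

lemma edge_slack_nonvanishing:
  assumes e: "(i, j) \<in> E" and other: "j \<noteq> succ i"
  shows "\<exists>r\<in>weights E. edge_slack n Vmax \<sigma> \<tau> i j r \<noteq> 0"
proof
  \<comment> \<open>the unit weight of (i, j) vanishes on every edge of the policy graph\<close>
  define r :: "nat \<times> nat \<Rightarrow> real" where "r = restrict (indicator {(i, j)}) E"
  show "r \<in> weights E" by (simp add: r_def weights_def)
  have zero: "r (l, succ l) = 0" if "l < n" for l
    using that other succ_edge by (simp add: r_def indicator_def)
  have "cycle_mean r = 0"
    using zero fcycle_subset[OF cycle_in_fcycles] by (simp add: cycle_mean_def subset_iff)
  moreover have "path_bias r l = 0" if "l < n" for l
    unfolding path_bias_def using zero funpow_in[of l] that \<open>cycle_mean r = 0\<close>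
    by (intro sum.neutral) auto
  ultimately show "edge_slack n Vmax \<sigma> \<tau> i j r \<noteq> 0"
    using e edge_source edge_target by (simp add: edge_slack_def lam_pol_eq u_pol_eq r_def)
qed

lemma path_bias_tight: "i < n \<Longrightarrow> r (i, succ i) + path_bias r (succ i) = cycle_mean r + path_bias r i"
  using potential_path_bias by (simp add: potential_def)

lemma strictly_optimal_max:
  assumes "r \<in> strictly_optimal n E Vmax \<sigma> \<tau>" and "i \<in> Vmax" and "(i, j) \<in> E" and "j \<noteq> succ i"
  shows "r (i, j) + path_bias r j < cycle_mean r + path_bias r i"
  using assms by (auto simp: strictly_optimal_def lam_pol_eq u_pol_eq succ_max)

lemma strictly_optimal_min:
  assumes "r \<in> strictly_optimal n E Vmax \<sigma> \<tau>" and "i \<in> Vmin n Vmax" and "(i, j) \<in> E" and "j \<noteq> succ i"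
  shows "cycle_mean r + path_bias r i < r (i, j) + path_bias r j"
  using assms by (auto simp: strictly_optimal_def lam_pol_eq u_pol_eq succ_min)

context
  fixes r :: "nat \<times> nat \<Rightarrow> real"
  assumes strict: "r \<in> strictly_optimal n E Vmax \<sigma> \<tau>"
begin

lemma strictly_optimal_ergodic_sol: "ergodic_sol n E Vmax r (cycle_mean r) (path_bias r)"
proof (rule ergodic_solI)
  show "\<exists>j. (i, j) \<in> E \<and> r (i, j) + path_bias r j = cycle_mean r + path_bias r i" if "i < n" for i
    using that succ_edge path_bias_tight by blast
  show "r (i, j) + path_bias r j \<le> cycle_mean r + path_bias r i" if "i \<in> Vmax" "(i, j) \<in> E" for i j
    using that strictly_optimal_max[OF strict] path_bias_tight[OF edge_source] by force
  show "cycle_mean r + path_bias r i \<le> r (i, j) + path_bias r j"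
    if "i \<in> Vmin n Vmax" "(i, j) \<in> E" for i j
    using that strictly_optimal_min[OF strict] path_bias_tight[OF edge_source] by force
qed

context
  fixes lam u
  assumes sol: "ergodic_sol n E Vmax r lam u"
begin

text \<open>With \<open>d = u - path_bias r\<close> and \<open>\<delta> = lam - cycle_mean r\<close>, the quantity
  \<open>d j - d i - \<delta>\<close> is the slack of \<open>(i, j)\<close> for \<open>(lam, u)\<close> minus its slack for
  \<open>(cycle_mean r, path_bias r)\<close>.\<close>

lemma strictly_optimal_ascent:
  assumes i: "i < n"
  shows "\<exists>j<n. u i - path_bias r i + (lam - cycle_mean r) \<le> u j - path_bias r j \<and>
           (u j - path_bias r j \<le> u i - path_bias r i + (lam - cycle_mean r) \<longrightarrow> j = succ i)"
proof (rule Vmax_or_Vmin[OF i])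
  assume iV: "i \<in> Vmax"
  obtain j where j: "(i, j) \<in> E" "r (i, j) + u j = lam + u i"
    using ergodic_sol_attained[OF sol i] by blast
  have "r (i, j) + path_bias r j \<le> cycle_mean r + path_bias r i \<and>
        (r (i, j) + path_bias r j = cycle_mean r + path_bias r i \<longrightarrow> j = succ i)"
    using strictly_optimal_max[OF strict iV j(1)] path_bias_tight[OF i, of r] by fastforce
  then show ?thesis using j edge_target[OF j(1)] by (intro exI[of _ j]) auto
next
  assume iV: "i \<in> Vmin n Vmax"
  have "lam + u i \<le> r (i, succ i) + u (succ i)" by (rule ergodic_sol_min_le[OF sol iV succ_edge[OF i]])
  then show ?thesis
    using path_bias_tight[OF i, of r] edge_target[OF succ_edge[OF i]] by (intro exI[of _ "succ i"]) auto
qed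

lemma strictly_optimal_descent:
  assumes i: "i < n"
  shows "\<exists>j<n. u j - path_bias r j \<le> u i - path_bias r i + (lam - cycle_mean r) \<and>
           (u i - path_bias r i + (lam - cycle_mean r) \<le> u j - path_bias r j \<longrightarrow> j = succ i)"
proof (rule Vmax_or_Vmin[OF i])
  assume iV: "i \<in> Vmax"
  have "r (i, succ i) + u (succ i) \<le> lam + u i" by (rule ergodic_sol_max_ge[OF sol iV succ_edge[OF i]])
  then show ?thesis
    using path_bias_tight[OF i, of r] edge_target[OF succ_edge[OF i]] by (intro exI[of _ "succ i"]) auto
next
  assume iV: "i \<in> Vmin n Vmax"
  obtain j where j: "(i, j) \<in> E" "r (i, j) + u j = lam + u i"
    using ergodic_sol_attained[OF sol i] by blast
  have "cycle_mean r + path_bias r i \<le> r (i, j) + path_bias r j \<and>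
        (r (i, j) + path_bias r j = cycle_mean r + path_bias r i \<longrightarrow> j = succ i)"
    using strictly_optimal_min[OF strict iV j(1)] path_bias_tight[OF i, of r] by fastforce
  then show ?thesis using j edge_target[OF j(1)] by (intro exI[of _ j]) auto
qed

lemma strictly_optimal_solution_unique: "lam = cycle_mean r \<and> (\<forall>i<n. u i = path_bias r i + u root)"
proof -
  let ?d = "\<lambda>i. u i - path_bias r i" and ?\<delta> = "lam - cycle_mean r"
  have up: "\<exists>j\<in>{..<n}. ?d i + ?\<delta> \<le> ?d j \<and> (?d j \<le> ?d i + ?\<delta> \<longrightarrow> j = succ i)" if "i \<in> {..<n}" for i
    using strictly_optimal_ascent[of i] that by (simp add: Bex_def)
  have down: "\<exists>j\<in>{..<n}. ?d j \<le> ?d i + ?\<delta> \<and> (?d i + ?\<delta> \<le> ?d j \<longrightarrow> j = succ i)" if "i \<in> {..<n}" for i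
    using strictly_optimal_descent[of i] that by (simp add: Bex_def)
  show ?thesis
    using drift_zero_and_constant[of ?d ?\<delta>, OF up down] by (auto simp: path_bias_root algebra_simps)
qed

lemma strictly_optimal_tight_iff:
  assumes e: "(i, j) \<in> E"
  shows "r (i, j) + u j = lam + u i \<longleftrightarrow> j = succ i"
proof -
  have i: "i < n" using edge_source[OF e] .
  have "r (i, j) + u j = lam + u i \<longleftrightarrow> r (i, j) + path_bias r j = cycle_mean r + path_bias r i"
    using strictly_optimal_solution_unique i edge_target[OF e] by auto
  also have "\<dots> \<longleftrightarrow> j = succ i"
  proof
    assume tight: "r (i, j) + path_bias r j = cycle_mean r + path_bias r i"
    show "j = succ i"
    proof (rule ccontr)
      assume other: "j \<noteq> succ i"
      show False
        by (rule Vmax_or_Vmin[OF i])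
          (use tight strictly_optimal_max[OF strict _ e other]
             strictly_optimal_min[OF strict _ e other] in auto)
    qed
  qed (use path_bias_tight[OF i, of r] in simp)
  finally show ?thesis .
qed

end

end

lemma strictly_optimal_subset_Pcone: "strictly_optimal n E Vmax \<sigma> \<tau> \<subseteq> Pcone n E Vmax \<sigma> \<tau>"
proof
  fix r assume strict: "r \<in> strictly_optimal n E Vmax \<sigma> \<tau>"
  have "bias_induced_pair n E Vmax r \<sigma> \<tau>"
    unfolding bias_induced_pair_iff_potential
    using strictly_optimal_ergodic_sol[OF strict] potential_path_bias by blast
  moreover have "\<sigma>' = \<sigma> \<and> \<tau>' = \<tau>" if pair: "bias_induced_pair n E Vmax r \<sigma>' \<tau>'" for \<sigma>' \<tau>'
  proof -
    obtain lam u where sol: "ergodic_sol n E Vmax r lam u"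
      and tight: "\<forall>i<n. r (i, succ_pol Vmax \<sigma>' \<tau>' i) + u (succ_pol Vmax \<sigma>' \<tau>' i) = lam + u i"
      and \<sigma>': "max_policy E Vmax \<sigma>'" and \<tau>': "min_policy n E Vmax \<tau>'"
      using pair unfolding bias_induced_pair_iff by blast
    have same: "succ_pol Vmax \<sigma>' \<tau>' i = succ i" if "i < n" for i
      using strictly_optimal_tight_iff[OF strict sol succ_pol_edge[OF \<sigma>' \<tau>' that]] tight that by blast
    have "\<sigma>' i = \<sigma> i" for i
    proof (cases "i \<in> Vmax")
      case True then show ?thesis using same[of i] Vmax_in by (auto simp: succ_pol_def)
    next
      case False then show ?thesis using \<sigma>' max_policy PiE_arb unfolding max_policy_def by metis
    qed
    moreover have "\<tau>' i = \<tau> i" for i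
    proof (cases "i \<in> Vmin n Vmax")
      case True then show ?thesis using same[of i] by (auto simp: succ_pol_def Vmin_iff)
    next
      case False then show ?thesis using \<tau>' min_policy PiE_arb unfolding min_policy_def by metis
    qed
    ultimately show ?thesis by (simp add: fun_eq_iff)
  qed
  moreover have "r \<in> weights E" using strict by (simp add: strictly_optimal_def)
  ultimately show "r \<in> Pcone n E Vmax \<sigma> \<tau>" unfolding Pcone_def by blast
qed

lemma strictly_optimal_if_loose:
  assumes r: "r \<in> weights E" and sol: "ergodic_sol n E Vmax r lam u" and pot: "potential r lam u"
    and loose: "\<And>i j. (i, j) \<in> E \<Longrightarrow> j \<noteq> succ i \<Longrightarrow> r (i, j) + u j \<noteq> lam + u i"
  shows "r \<in> strictly_optimal n E Vmax \<sigma> \<tau>"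
proof -
  have u: "lam = cycle_mean r" "\<forall>l<n. u l = path_bias r l + u root"
    using pot unfolding potential_iff by auto
  have "cycle_mean r + path_bias r i - path_bias r j > r (i, j)"
    if "(i, j) \<in> E" "i \<in> Vmax" "j \<noteq> \<sigma> i" for i j
    using ergodic_sol_max_ge[OF sol that(2,1)] loose[OF that(1)] u edge_source[OF that(1)]
      edge_target[OF that(1)] that(3) succ_max[OF that(2)] by fastforce
  moreover have "cycle_mean r + path_bias r i - path_bias r j < r (i, j)"
    if "(i, j) \<in> E" "i \<in> Vmin n Vmax" "j \<noteq> \<tau> i" for i j
    using ergodic_sol_min_le[OF sol that(2,1)] loose[OF that(1)] u edge_source[OF that(1)]
      edge_target[OF that(1)] that(3) succ_min[OF that(2)] by fastforce
  ultimately show ?thesis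
    using r by (auto simp: strictly_optimal_def lam_pol_eq u_pol_eq)
qed

lemma Pcone_subset_strictly_optimal: "Pcone n E Vmax \<sigma> \<tau> \<subseteq> strictly_optimal n E Vmax \<sigma> \<tau>"
proof
  fix r assume r: "r \<in> Pcone n E Vmax \<sigma> \<tau>"
  obtain lam u where sol: "ergodic_sol n E Vmax r lam u" and pot: "potential r lam u"
    using r unfolding Pcone_def bias_induced_pair_iff_potential by blast
  then have tight: "\<forall>i<n. r (i, succ i) + u (succ i) = lam + u i" by (simp add: potential_def)
  \<comment> \<open>a tight edge off the policy graph would yield a second bias-induced pair\<close>
  have "r (i, j) + u j \<noteq> lam + u i" if e: "(i, j) \<in> E" and other: "j \<noteq> succ i" for i j
    using tight_edge_other_pair[OF max_policy min_policy sol tight e _ other] r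
    unfolding Pcone_def by blast
  then show "r \<in> strictly_optimal n E Vmax \<sigma> \<tau>"
    using strictly_optimal_if_loose[OF _ sol pot] r by (simp add: Pcone_def)
qed

lemma Pcone_eq_strictly_optimal: "Pcone n E Vmax \<sigma> \<tau> = strictly_optimal n E Vmax \<sigma> \<tau>"
  using strictly_optimal_subset_Pcone Pcone_subset_strictly_optimal by blast

lemma open_polyhedral_cone_Pcone: "open_polyhedral_cone E (Pcone n E Vmax \<sigma> \<tau>)"
proof -
  define F where "F =
    (\<lambda>(i, j). edge_slack n Vmax \<sigma> \<tau> i j) ` {(i, j) \<in> E. i \<in> Vmax \<and> j \<noteq> \<sigma> i} \<union>
    (\<lambda>(i, j) r. - edge_slack n Vmax \<sigma> \<tau> i j r) ` {(i, j) \<in> E. i \<in> Vmin n Vmax \<and> j \<noteq> \<tau> i}"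
  have "finite F" unfolding F_def using finite_E by (auto intro: finite_subset[OF _ finite_E])
  moreover have "linear_form E L" if "L \<in> F" for L
    using that linear_form_edge_slack linear_form_minus by (auto simp: F_def)
  moreover have "(\<forall>L\<in>F. L r > 0) \<longleftrightarrow> (\<forall>(i, j)\<in>E.
      (i \<in> Vmax \<and> j \<noteq> \<sigma> i \<longrightarrow> edge_slack n Vmax \<sigma> \<tau> i j r > 0) \<and>
      (i \<in> Vmin n Vmax \<and> j \<noteq> \<tau> i \<longrightarrow> edge_slack n Vmax \<sigma> \<tau> i j r < 0))" for r
    unfolding F_def ball_Un by (auto dest!: ball_imageD)
  then have "strictly_optimal n E Vmax \<sigma> \<tau> = {r \<in> weights E. \<forall>L\<in>F. L r > 0}"
    unfolding strictly_optimal_def edge_slack_def by simp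
  ultimately show ?thesis
    unfolding Pcone_eq_strictly_optimal by (simp add: open_polyhedral_cone_linear_forms)
qed

end

section \<open>Generic weights\<close>

lemma Pcone_disjoint:
  assumes "(\<sigma>, \<tau>) \<noteq> (\<sigma>', \<tau>')"
  shows "Pcone n E Vmax \<sigma> \<tau> \<inter> Pcone n E Vmax \<sigma>' \<tau>' = {}"
  using assms unfolding Pcone_def by blast

context game
begin

lemma Xi_pair_of: "(\<sigma>, \<tau>) \<in> Xi n E Vmax \<Longrightarrow> Xi_pair n E Vmax \<sigma> \<tau>"
  unfolding Xi_def Xi_pair_def Xi_pair_axioms_def policy_pair_def policy_pair_axioms_def
  using game_axioms by auto

lemma policy_pair_of: "max_policy E Vmax \<sigma> \<Longrightarrow> min_policy n E Vmax \<tau> \<Longrightarrow> policy_pair n E Vmax \<sigma> \<tau>"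
  by (simp add: policy_pair_def policy_pair_axioms_def game_axioms)

lemma policy_fcycle_subset:
  assumes "max_policy E Vmax \<sigma>" and "min_policy n E Vmax \<tau>" and "C \<in> fcycles (succ_pol Vmax \<sigma> \<tau>) {..<n}"
  shows "C \<subseteq> {..<n}"
proof -
  interpret policy_pair n E Vmax \<sigma> \<tau> using assms(1,2) by (rule policy_pair_of)
  show ?thesis using assms(3) by (rule fcycle_subset)
qed

definition degeneracy_forms :: "((nat \<times> nat \<Rightarrow> real) \<Rightarrow> real) set" where
  "degeneracy_forms =
     (\<lambda>(\<sigma>, \<tau>, i, j). edge_slack n Vmax \<sigma> \<tau> i j) `
       {(\<sigma>, \<tau>, i, j). (\<sigma>, \<tau>) \<in> Xi n E Vmax \<and> (i, j) \<in> E \<and> j \<noteq> succ_pol Vmax \<sigma> \<tau> i} \<union>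
     (\<lambda>(\<sigma>, \<tau>, C1, C2). cycle_weight_gap (succ_pol Vmax \<sigma> \<tau>) C1 C2) `
       {(\<sigma>, \<tau>, C1, C2). max_policy E Vmax \<sigma> \<and> min_policy n E Vmax \<tau> \<and> C1 \<noteq> C2 \<and>
          C1 \<in> fcycles (succ_pol Vmax \<sigma> \<tau>) {..<n} \<and> C2 \<in> fcycles (succ_pol Vmax \<sigma> \<tau>) {..<n}}"

lemma finite_degeneracy_forms: "finite degeneracy_forms"
proof -
  have "{(\<sigma>, \<tau>, i, j). (\<sigma>, \<tau>) \<in> Xi n E Vmax \<and> (i, j) \<in> E \<and> j \<noteq> succ_pol Vmax \<sigma> \<tau> i}
        \<subseteq> fst ` Xi n E Vmax \<times> snd ` Xi n E Vmax \<times> E"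
    by force
  moreover have "{(\<sigma>, \<tau>, C1, C2). max_policy E Vmax \<sigma> \<and> min_policy n E Vmax \<tau> \<and> C1 \<noteq> C2 \<and>
          C1 \<in> fcycles (succ_pol Vmax \<sigma> \<tau>) {..<n} \<and> C2 \<in> fcycles (succ_pol Vmax \<sigma> \<tau>) {..<n}}
        \<subseteq> {\<sigma>. max_policy E Vmax \<sigma>} \<times> {\<tau>. min_policy n E Vmax \<tau>} \<times> Pow {..<n} \<times> Pow {..<n}"
    using policy_fcycle_subset by blast
  ultimately show ?thesis
    unfolding degeneracy_forms_def using finite_Xi finite_E finite_max_policies finite_min_policies
    by (meson finite_SigmaI finite_Pow_iff finite_lessThan finite_UnI finite_imageI finite_subset)
qed

lemma degeneracy_forms_nonvanishing:
  assumes "L \<in> degeneracy_forms"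
  shows "linear_form E L \<and> (\<exists>r\<in>weights E. L r \<noteq> 0)"
proof -
  have edge: "linear_form E (edge_slack n Vmax \<sigma> \<tau> i j) \<and>
      (\<exists>r\<in>weights E. edge_slack n Vmax \<sigma> \<tau> i j r \<noteq> 0)"
    if "(\<sigma>, \<tau>) \<in> Xi n E Vmax" and e: "(i, j) \<in> E" and other: "j \<noteq> succ_pol Vmax \<sigma> \<tau> i" for \<sigma> \<tau> i j
  proof -
    interpret Xi_pair n E Vmax \<sigma> \<tau> using that(1) by (rule Xi_pair_of)
    show ?thesis using linear_form_edge_slack[OF e] edge_slack_nonvanishing[OF e other] by blast
  qed
  have cycles: "linear_form E (cycle_weight_gap (succ_pol Vmax \<sigma> \<tau>) C1 C2) \<and>
      (\<exists>r\<in>weights E. cycle_weight_gap (succ_pol Vmax \<sigma> \<tau>) C1 C2 r \<noteq> 0)"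
    if "max_policy E Vmax \<sigma>" "min_policy n E Vmax \<tau>" "C1 \<noteq> C2"
      and C1: "C1 \<in> fcycles (succ_pol Vmax \<sigma> \<tau>) {..<n}" and C2: "C2 \<in> fcycles (succ_pol Vmax \<sigma> \<tau>) {..<n}"
    for \<sigma> \<tau> C1 C2
  proof -
    interpret policy_pair n E Vmax \<sigma> \<tau> using that(1,2) by (rule policy_pair_of)
    show ?thesis
      using linear_form_cycle_weight_gap[OF C1 C2] cycle_weight_gap_nonvanishing[OF C1 C2 that(3)]
      by blast
  qed
  show ?thesis using assms unfolding degeneracy_forms_def by (auto dest: edge cycles)
qed

lemma nondegenerate_weights_in_Ucones:
  assumes erg: "ergodic_graph n E Vmax" and n: "n \<ge> 1" and r: "r \<in> weights E"
    and nondeg: "\<forall>L\<in>degeneracy_forms. L r \<noteq> 0"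
  shows "r \<in> Ucones n E Vmax"
proof -
  obtain lam u where sol: "ergodic_sol n E Vmax r lam u"
    using erg r unfolding ergodic_graph_def by blast
  obtain \<sigma> \<tau> where \<sigma>: "max_policy E Vmax \<sigma>" and \<tau>: "min_policy n E Vmax \<tau>"
    and tight: "\<forall>i<n. r (i, succ_pol Vmax \<sigma> \<tau> i) + u (succ_pol Vmax \<sigma> \<tau> i) = lam + u i"
    using ergodic_sol_induces_pair[OF sol] .
  interpret policy_pair n E Vmax \<sigma> \<tau> using \<sigma> \<tau> by (rule policy_pair_of)
  have pot: "potential r lam u" using tight by (simp add: potential_def)
  \<comment> \<open>two cycles of the policy graph of a potential have the same mean weight\<close>
  have same: "C1 = C2" if C: "C1 \<in> fcycles succ {..<n}" "C2 \<in> fcycles succ {..<n}" for C1 C2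
  proof (rule ccontr)
    assume "C1 \<noteq> C2"
    then have "cycle_weight_gap succ C1 C2 \<in> degeneracy_forms"
      unfolding degeneracy_forms_def using \<sigma> \<tau> C by (auto intro!: image_eqI[where x = "(\<sigma>, \<tau>, C1, C2)"])
    then show False using nondeg potential_cycle_weight_gap[OF pot C] by blast
  qed
  obtain C where "C \<in> fcycles succ {..<n}"
    using fcycles_nonempty n by (metis ex_in_conv lessThan_empty_iff not_one_le_zero)
  then have "fcycles succ {..<n} = {C}" using same by blast
  then have xi: "(\<sigma>, \<tau>) \<in> Xi n E Vmax" using \<sigma> \<tau> by (simp add: Xi_def)
  interpret Xi_pair n E Vmax \<sigma> \<tau> using xi by (rule Xi_pair_of)
  have "r (i, j) + u j \<noteq> lam + u i" if e: "(i, j) \<in> E" and other: "j \<noteq> succ i" for i j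
  proof
    assume tight_e: "r (i, j) + u j = lam + u i"
    have "edge_slack n Vmax \<sigma> \<tau> i j \<in> degeneracy_forms"
      unfolding degeneracy_forms_def using xi e other
      by (auto intro!: image_eqI[where x = "(\<sigma>, \<tau>, i, j)"])
    moreover have "edge_slack n Vmax \<sigma> \<tau> i j r = 0"
      using pot tight_e edge_source[OF e] edge_target[OF e]
      by (auto simp: potential_iff edge_slack_def lam_pol_eq u_pol_eq)
    ultimately show False using nondeg by blast
  qed
  then have "r \<in> strictly_optimal n E Vmax \<sigma> \<tau>" by (rule strictly_optimal_if_loose[OF r sol pot])
  then show ?thesis using xi Pcone_eq_strictly_optimal unfolding Ucones_def by blast
qed

lemma complement_Ucones_in_hyperplanes:
  assumes "ergodic_graph n E Vmax" and "n \<ge> 1"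
  shows "\<exists>H. finite H \<and> (\<forall>(a, b)\<in>H. \<exists>e\<in>E. a e \<noteq> 0) \<and>
           weights E - Ucones n E Vmax \<subseteq> (\<Union>(a, b)\<in>H. hyperplane E a b)"
proof -
  have "\<exists>H. finite H \<and> (\<forall>(a, b)\<in>H. \<exists>e\<in>E. a e \<noteq> 0) \<and>
          {r \<in> weights E. \<exists>L\<in>degeneracy_forms. L r = 0} \<subseteq> (\<Union>(a, b)\<in>H. hyperplane E a b)"
    using finite_degeneracy_forms degeneracy_forms_nonvanishing
    by (rule linear_forms_zero_set_in_hyperplanes)
  then obtain H where "finite H" and "\<forall>(a, b)\<in>H. \<exists>e\<in>E. a e \<noteq> 0"
    and zeros: "{r \<in> weights E. \<exists>L\<in>degeneracy_forms. L r = 0} \<subseteq> (\<Union>(a, b)\<in>H. hyperplane E a b)"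
    by (elim exE conjE)
  moreover have "weights E - Ucones n E Vmax \<subseteq> {r \<in> weights E. \<exists>L\<in>degeneracy_forms. L r = 0}"
    using nondegenerate_weights_in_Ucones[OF assms] by auto
  ultimately show ?thesis by (intro exI[of _ H] conjI) auto
qed

lemma Ucones_sets: "Ucones n E Vmax \<in> sets (PiM E (\<lambda>_. lborel))"
  unfolding Ucones_def
  using finite_Xi
    open_polyhedral_cone_sets[OF finite_E Xi_pair.open_polyhedral_cone_Pcone[OF Xi_pair_of]]
  by auto

lemma complement_Ucones_null_sets:
  assumes "ergodic_graph n E Vmax" and "n \<ge> 1"
  shows "weights E - Ucones n E Vmax \<in> null_sets (PiM E (\<lambda>_. lborel))"
proof -
  have "weights E - Ucones n E Vmax = space (PiM E (\<lambda>_. lborel)) - Ucones n E Vmax"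
    by (simp add: space_PiM weights_def)
  then have "weights E - Ucones n E Vmax \<in> sets (PiM E (\<lambda>_. lborel))"
    using Ucones_sets by simp
  then show ?thesis
    using complement_Ucones_in_hyperplanes[OF assms] null_sets_if_in_hyperplanes[OF finite_E] by blast
qed

lemma UconesE:
  assumes "r \<in> Ucones n E Vmax"
  obtains \<sigma> \<tau> where "Xi_pair n E Vmax \<sigma> \<tau>" and "r \<in> strictly_optimal n E Vmax \<sigma> \<tau>"
proof -
  obtain \<sigma> \<tau> where xi: "(\<sigma>, \<tau>) \<in> Xi n E Vmax" and "r \<in> Pcone n E Vmax \<sigma> \<tau>"
    using assms unfolding Ucones_def by blast
  then show thesis
    using that[OF Xi_pair_of[OF xi]] Xi_pair.Pcone_eq_strictly_optimal[OF Xi_pair_of[OF xi]] by simp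
qed

lemma Ucones_solution_unique:
  assumes "r \<in> Ucones n E Vmax" and "ergodic_sol n E Vmax r lam u" and "ergodic_sol n E Vmax r lam' u'"
  shows "lam' = lam \<and> (\<exists>c. \<forall>i<n. u' i = u i + c)"
proof -
  obtain \<sigma> \<tau> where "Xi_pair n E Vmax \<sigma> \<tau>" and strict: "r \<in> strictly_optimal n E Vmax \<sigma> \<tau>"
    using assms(1) by (rule UconesE)
  interpret Xi_pair n E Vmax \<sigma> \<tau> by fact
  show ?thesis
    using strictly_optimal_solution_unique[OF strict assms(2)]
      strictly_optimal_solution_unique[OF strict assms(3)]
    by (intro conjI exI[of _ "u' root - u root"]) auto
qed

lemma Ucones_unique_tight_edge:
  assumes "r \<in> Ucones n E Vmax" and "ergodic_sol n E Vmax r lam u" and "i < n"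
  shows "\<exists>!j. (i, j) \<in> E \<and> r (i, j) + u j = lam + u i"
proof -
  obtain \<sigma> \<tau> where "Xi_pair n E Vmax \<sigma> \<tau>" and strict: "r \<in> strictly_optimal n E Vmax \<sigma> \<tau>"
    using assms(1) by (rule UconesE)
  interpret Xi_pair n E Vmax \<sigma> \<tau> by fact
  show ?thesis
    using strictly_optimal_tight_iff[OF strict assms(2)] succ_edge[OF assms(3)] by blast
qed

end

theorem mainTheorem10:
  fixes n :: nat and E :: "(nat \<times> nat) set" and Vmax :: "nat set"
  assumes "n \<ge> 1"
    and "E \<subseteq> {..<n} \<times> {..<n}"
    and "Vmax \<subseteq> {..<n}"
    and "\<forall>i<n. \<exists>j. (i, j) \<in> E"
    and "ergodic_graph n E Vmax"
  shows
    "(\<forall>(\<sigma>, \<tau>) \<in> Xi n E Vmax.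
        Pcone n E Vmax \<sigma> \<tau> =
          {r \<in> weights E. \<forall>(i, j) \<in> E.
             (i \<in> Vmax \<and> j \<noteq> \<sigma> i \<longrightarrow>
                lam_pol n Vmax \<sigma> \<tau> r + u_pol n Vmax \<sigma> \<tau> r i - u_pol n Vmax \<sigma> \<tau> r j > r (i, j)) \<and>
             (i \<in> Vmin n Vmax \<and> j \<noteq> \<tau> i \<longrightarrow>
                lam_pol n Vmax \<sigma> \<tau> r + u_pol n Vmax \<sigma> \<tau> r i - u_pol n Vmax \<sigma> \<tau> r j < r (i, j))})
     \<and> (\<forall>(\<sigma>, \<tau>) \<in> Xi n E Vmax. open_polyhedral_cone E (Pcone n E Vmax \<sigma> \<tau>))
     \<and> (\<forall>p \<in> Xi n E Vmax. \<forall>q \<in> Xi n E Vmax. p \<noteq> q \<longrightarrow>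
          Pcone n E Vmax (fst p) (snd p) \<inter> Pcone n E Vmax (fst q) (snd q) = {})
     \<and> (\<exists>H. finite H \<and> (\<forall>(a, b) \<in> H. \<exists>e\<in>E. a e \<noteq> 0) \<and>
          weights E - Ucones n E Vmax \<subseteq> (\<Union>(a, b) \<in> H. hyperplane E a b))
     \<and> weights E - Ucones n E Vmax \<in> null_sets (PiM E (\<lambda>_. lborel))
     \<and> (\<forall>r \<in> Ucones n E Vmax.
          (\<forall>lam u lam' u'. ergodic_sol n E Vmax r lam u \<and> ergodic_sol n E Vmax r lam' u' \<longrightarrow>
              lam' = lam \<and> (\<exists>c. \<forall>i<n. u' i = u i + c)) \<and>
          (\<forall>lam u. ergodic_sol n E Vmax r lam u \<longrightarrow>
              (\<forall>i\<in>Vmax. \<exists>!j. (i, j) \<in> E \<and> r (i, j) + u j = lam + u i) \<and>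
              (\<forall>i\<in>Vmin n Vmax. \<exists>!j. (i, j) \<in> E \<and> r (i, j) + u j = lam + u i)))"
proof -
  interpret game n E Vmax using assms(2-4) by unfold_locales auto
  have Pcone_eq: "Pcone n E Vmax \<sigma> \<tau> = strictly_optimal n E Vmax \<sigma> \<tau>"
    and cone: "open_polyhedral_cone E (Pcone n E Vmax \<sigma> \<tau>)" if "(\<sigma>, \<tau>) \<in> Xi n E Vmax" for \<sigma> \<tau>
    using Xi_pair.Pcone_eq_strictly_optimal Xi_pair.open_polyhedral_cone_Pcone Xi_pair_of[OF that]
    by blast+
  have unique_edge: "\<exists>!j. (i, j) \<in> E \<and> r (i, j) + u j = lam + u i"
    if "r \<in> Ucones n E Vmax" "ergodic_sol n E Vmax r lam u" "i \<in> Vmax \<union> Vmin n Vmax" for r lam u i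
  proof -
    have "i < n" using that(3) Vmax_in by (auto simp: Vmin_iff)
    then show ?thesis by (rule Ucones_unique_tight_edge[OF that(1,2)])
  qed
  show ?thesis
    unfolding strictly_optimal_def[symmetric]
    apply (intro conjI)
    subgoal using Pcone_eq by blast
    subgoal using cone by blast
    subgoal using Pcone_disjoint by (simp add: prod_eq_iff)
    subgoal using complement_Ucones_in_hyperplanes[OF assms(5,1)] .
    subgoal using complement_Ucones_null_sets[OF assms(5,1)] .
    subgoal using Ucones_solution_unique unique_edge by blast
    done
qed

end
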